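(* Let $H:\mathbb R_+\to(0,1)$ be continuous with constants $0<h_1<h_2<1$ such that $h_1\le H_t\le h_2$ for all $t\ge0$, and let $Y$ be the multifractional Brownian motion with Hurst function $H$. Then there exists a constant $K_2>0$ such that for all $t\ge s\ge0$, \[ \mathbb E(Y(t)-Y(s))^2\le K_2|t-s|^{2H_t}+K_2(H_t-H_s)^2z^2(s), \] where $z(s)=s^{h_2}(\log^2s+1)^{1/2}$ for $s\ge1$ and $z(s)=1$ for $0\le s<1$.
   Context: The (harmonizable) multifractional Brownian motion with continuous functional parameter $H$ is $Y(t)=\int_{\mathbb R}\frac{e^{itu}-1}{|u|^{H_t+1/2}}\widetilde W(du)$, $t\ge0$, where $\widetilde W$ is the Fourier transform of real Gaussian white noise $W$ (the unique complex-valued random measure with $\int f\,dW=\int\widehat f\,d\widetilde W$ a.s. for all $f\in L^2(\mathbb R)$). *)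

theory Defs
  imports "HOL-Probability.Probability"
begin

text \<open>Integrand of the harmonizable representation of multifractional Brownian motion:
  Y(t) = \<integral> (e^{itu}-1)/|u|^{H_t+1/2} dW~(u).\<close>
definition mbm_kernel :: "(real \<Rightarrow> real) \<Rightarrow> real \<Rightarrow> real \<Rightarrow> complex" where
  "mbm_kernel H t u = (cis (t * u) - 1) / complex_of_real (\<bar>u\<bar> powr (H t + 1/2))"

definition zfun :: "real \<Rightarrow> real \<Rightarrow> real" where
  "zfun h2 s = (if s \<ge> 1 then s powr h2 * sqrt ((ln s)\<^sup>2 + 1) else 1)"

text \<open>Y is (a version of) the harmonizable mBm with Hurst function H on the
  probability space M: the isometry of the Fourier transform of white noise
  gives E (Y t - Y s)^2 = c * \<integral> |k_t(u) - k_s(u)|^2 du, where c > 0 is the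
  normalising constant of the Fourier-transform convention.\<close>
definition is_harmonizable_mbm ::
  "'a measure \<Rightarrow> (real \<Rightarrow> 'a \<Rightarrow> real) \<Rightarrow> (real \<Rightarrow> real) \<Rightarrow> real \<Rightarrow> bool" where
  "is_harmonizable_mbm M Y H c \<longleftrightarrow>
     prob_space M \<and> c > 0 \<and>
     (\<forall>t\<ge>0. Y t \<in> borel_measurable M) \<and>
     (\<forall>t\<ge>0. \<forall>s\<ge>0. integrable M (\<lambda>\<omega>. (Y t \<omega> - Y s \<omega>)\<^sup>2) \<and>
        (\<integral>\<omega>. (Y t \<omega> - Y s \<omega>)\<^sup>2 \<partial>M) =
          c * (\<integral>u. (cmod (mbm_kernel H t u - mbm_kernel H s u))\<^sup>2 \<partial>lborel))"

end

theory Submission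
  imports Defs
begin

text \<open>
  Put d = t - s and r = |u|. Then
  k_t(u) - k_s(u) = e^{isu} (e^{idu} - 1) r^{-H_t-1/2} + (e^{isu} - 1) (r^{-H_t-1/2} - r^{-H_s-1/2}).
  The first term is at most min(dr, 2) r^{-H_t-1/2}, whose square integrates to a multiple of
  d^{2H_t} by scaling. In the second, |e^{isu} - 1| \<le> min(sr, 2), and the mean value theorem in
  the exponent bounds the difference of powers by |H_t - H_s| |ln r| max(r^{-h_2-1/2}, r^{-h_1-1/2}).
  Splitting at r = 1/max(s, 1) and r = 1 and absorbing the logarithms into small powers of r,
  the square of the second term integrates to (H_t - H_s)^2 times a multiple of z(s)^2.
\<close>

lemma norm_cis_minus_one_le_abs: "cmod (cis x - 1) \<le> \<bar>x\<bar>"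
  using iexp_approx1[of x 0] by (simp add: cis_conv_exp mult.commute)

lemma norm_cis_minus_one_le_2: "cmod (cis x - 1) \<le> 2"
  by (metis norm_cis norm_one norm_triangle_ineq4 one_add_one)

lemma sq_mult_powr: "0 < r \<Longrightarrow> r\<^sup>2 * r powr x = r powr (x + 2)" for r x :: real
  by (simp add: powr_add)

lemma ln_sq_le_powr:
  fixes x e :: real
  assumes "1 \<le> x" "0 < e"
  shows "(ln x)\<^sup>2 \<le> x powr (2 * e) / e\<^sup>2"
proof -
  have "(ln x)\<^sup>2 \<le> (x powr e / e)\<^sup>2"
    using assms ln_powr_bound[of x e] by (intro power_mono) auto
  also have "\<dots> = x powr (2 * e) / e\<^sup>2"
    using assms by (simp add: power_divide powr_power)
  finally show ?thesis .
qed

lemma ln_sq_le_powr_neg: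
  fixes x e :: real
  assumes "0 < x" "x \<le> 1" "0 < e"
  shows "(ln x)\<^sup>2 \<le> x powr (- 2 * e) / e\<^sup>2"
proof -
  have "(ln x)\<^sup>2 = (ln (1 / x))\<^sup>2"
    using assms by (simp add: ln_div)
  also have "\<dots> \<le> (1 / x) powr (2 * e) / e\<^sup>2"
    using assms by (intro ln_sq_le_powr) auto
  also have "\<dots> = x powr (- 2 * e) / e\<^sup>2"
    using assms by (simp add: powr_divide powr_minus_divide)
  finally show ?thesis .
qed

lemma abs_exp_diff_le: "\<bar>exp x - exp y\<bar> \<le> \<bar>x - y\<bar> * max (exp x) (exp y)" for x y :: real
proof -
  have *: "exp b - exp a \<le> (b - a) * exp b" if "a \<le> b" for a b :: real
  proof -
    have "exp b * (1 + (a - b)) \<le> exp b * exp (a - b)"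
      using exp_ge_add_one_self[of "a - b"] by simp
    then show ?thesis
      by (simp add: exp_diff algebra_simps)
  qed
  show ?thesis
    using *[of x y] *[of y x] by (cases "x \<le> y") (auto simp: abs_if max_def)
qed

definition powr_envelope :: "real \<Rightarrow> real \<Rightarrow> real \<Rightarrow> real" where
  "powr_envelope h1 h2 r = (if r < 1 then r powr (-(h2 + 1/2)) else r powr (-(h1 + 1/2)))"

lemma powr_le_envelope:
  assumes "0 < r" "h1 \<le> A" "A \<le> h2"
  shows "r powr (-(A + 1/2)) \<le> powr_envelope h1 h2 r"
  using assms by (cases "r < 1") (simp_all add: powr_envelope_def powr_mono' powr_mono)

lemma abs_powr_diff_le_envelope:
  fixes r A B h1 h2 :: real
  assumes r: "0 < r" and AB: "h1 \<le> A" "A \<le> h2" "h1 \<le> B" "B \<le> h2"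
  shows "\<bar>r powr (-(A + 1/2)) - r powr (-(B + 1/2))\<bar> \<le> \<bar>A - B\<bar> * \<bar>ln r\<bar> * powr_envelope h1 h2 r"
proof -
  have "\<bar>r powr (-(A + 1/2)) - r powr (-(B + 1/2))\<bar>
      \<le> \<bar>-(A + 1/2) * ln r - -(B + 1/2) * ln r\<bar> * max (r powr (-(A + 1/2))) (r powr (-(B + 1/2)))"
    using abs_exp_diff_le[of "-(A + 1/2) * ln r" "-(B + 1/2) * ln r"] r
    by (simp add: powr_def mult.commute)
  also have "\<dots> = \<bar>A - B\<bar> * \<bar>ln r\<bar> * max (r powr (-(A + 1/2))) (r powr (-(B + 1/2)))"
    by (simp add: left_diff_distrib[symmetric] abs_mult abs_minus_commute)
  also have "\<dots> \<le> \<bar>A - B\<bar> * \<bar>ln r\<bar> * powr_envelope h1 h2 r"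
    using powr_le_envelope r AB by (intro mult_left_mono) auto
  finally show ?thesis .
qed

definition powr_head :: "real \<Rightarrow> real \<Rightarrow> real \<Rightarrow> real" where
  "powr_head a p x = (if x \<in> {0..a} then x powr p else 0)"

definition powr_tail :: "real \<Rightarrow> real \<Rightarrow> real \<Rightarrow> real" where
  "powr_tail a p x = (if x \<in> {a..} then x powr p else 0)"

lemma powr_head_nonneg: "0 \<le> powr_head a p x"
  by (simp add: powr_head_def)

lemma powr_tail_nonneg: "0 \<le> powr_tail a p x"
  by (simp add: powr_tail_def)

lemma borel_measurable_powr_head [measurable]: "powr_head a p \<in> borel_measurable borel"
  unfolding powr_head_def[abs_def] by measurable

lemma borel_measurable_powr_tail [measurable]: "powr_tail a p \<in> borel_measurable borel"
  unfolding powr_tail_def[abs_def] by measurable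

lemma has_integral_powr_head:
  assumes "-1 < p" "0 \<le> a"
  shows "(powr_head a p has_integral a powr (p + 1) / (p + 1)) UNIV"
  unfolding powr_head_def[abs_def] has_integral_restrict_UNIV
  using has_integral_powr_from_0[OF assms] .

lemma has_integral_powr_tail:
  assumes "p < -1" "0 < a"
  shows "(powr_tail a p has_integral - (a powr (p + 1)) / (p + 1)) UNIV"
  unfolding powr_tail_def[abs_def] has_integral_restrict_UNIV
  using has_integral_powr_to_inf[OF assms] .

definition time_majorant :: "real \<Rightarrow> real \<Rightarrow> real \<Rightarrow> real" where
  "time_majorant d A r = d\<^sup>2 * powr_head (1/d) (1 - 2*A) r + 4 * powr_tail (1/d) (-2*A - 1) r"

lemma time_majorant_nonneg: "0 \<le> time_majorant d A r"
  by (simp add: time_majorant_def powr_head_nonneg powr_tail_nonneg)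

lemma borel_measurable_time_majorant [measurable]: "time_majorant d A \<in> borel_measurable borel"
  unfolding time_majorant_def[abs_def] by measurable

lemma time_majorant_ge:
  fixes d A r :: real
  assumes d: "0 < d" and r: "0 < r"
  shows "(min (d * r) 2 * r powr (-(A + 1/2)))\<^sup>2 \<le> time_majorant d A r"
proof -
  have sq: "(min (d * r) 2 * r powr (-(A + 1/2)))\<^sup>2 = (min (d * r) 2)\<^sup>2 * r powr (-2*A - 1)"
    using r by (simp add: power_mult_distrib powr_power algebra_simps)
  show ?thesis
  proof (cases "r \<le> 1/d")
    case True
    have "(min (d * r) 2)\<^sup>2 * r powr (-2*A - 1) \<le> (d * r)\<^sup>2 * r powr (-2*A - 1)"
      using d r by (intro mult_right_mono power_mono) auto
    also have "\<dots> = d\<^sup>2 * r powr (1 - 2*A)"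
      using r by (simp add: power_mult_distrib sq_mult_powr)
    also have "\<dots> = d\<^sup>2 * powr_head (1/d) (1 - 2*A) r"
      using True r by (simp add: powr_head_def)
    finally show ?thesis
      unfolding sq time_majorant_def using powr_tail_nonneg[of "1/d" "-2*A - 1" r] by linarith
  next
    case False
    have "(min (d * r) 2)\<^sup>2 * r powr (-2*A - 1) \<le> 2\<^sup>2 * r powr (-2*A - 1)"
      using d r by (intro mult_right_mono power_mono) auto
    also have "\<dots> = 4 * powr_tail (1/d) (-2*A - 1) r"
      using False by (simp add: powr_tail_def)
    finally show ?thesis
      unfolding sq time_majorant_def using False d r by (simp add: powr_head_def)
  qed
qed

lemma has_integral_time_majorant:
  fixes d A :: real
  assumes d: "0 < d" and A: "0 < A" "A < 1"
  shows "(time_majorant d A has_integral d powr (2*A) * (1/(2 - 2*A) + 2/A)) UNIV"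
proof -
  have "(time_majorant d A has_integral
          d\<^sup>2 * ((1/d) powr (1 - 2*A + 1) / (1 - 2*A + 1))
          + 4 * (- ((1/d) powr (-2*A - 1 + 1)) / (-2*A - 1 + 1))) UNIV"
    unfolding time_majorant_def[abs_def] using d A
    by (intro has_integral_add has_integral_mult_right has_integral_powr_head has_integral_powr_tail) auto
  moreover have "d\<^sup>2 * (1/d) powr (1 - 2*A + 1) = d powr (2*A)"
    using d by (simp add: powr_divide powr_minus_divide[symmetric] sq_mult_powr)
  moreover have "(1/d) powr (-2*A - 1 + 1) = d powr (2*A)"
    using d by (simp add: powr_divide powr_minus_divide[symmetric])
  ultimately show ?thesis
    using A by (simp add: field_simps)
qed

definition hurst_majorant :: "real \<Rightarrow> real \<Rightarrow> real \<Rightarrow> real \<Rightarrow> real" where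
  "hurst_majorant h1 h2 S r =
     2 * S\<^sup>2 * (ln S)\<^sup>2 * powr_head (1/S) (1 - 2*h2) r
   + 8 * S powr (1 + h2) / (1 - h2)\<^sup>2 * powr_head (1/S) (-h2) r
   + 4 * (ln S)\<^sup>2 * powr_tail (1/S) (-2*h2 - 1) r
   + 16 / h1\<^sup>2 * powr_tail 1 (-h1 - 1) r"

lemma hurst_majorant_nonneg: "0 \<le> hurst_majorant h1 h2 S r"
  by (simp add: hurst_majorant_def powr_head_nonneg powr_tail_nonneg)

lemma borel_measurable_hurst_majorant [measurable]:
  "hurst_majorant h1 h2 S \<in> borel_measurable borel"
  unfolding hurst_majorant_def[abs_def] by measurable

lemma sq_mult_le_sq_mult: "0 \<le> m \<Longrightarrow> m \<le> n \<Longrightarrow> (m * x)\<^sup>2 \<le> (n * x)\<^sup>2" for m n x :: real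
  by (simp add: power_mult_distrib mult_right_mono power_mono)

text \<open>Near the origin the factor S r of |e^{isu} - 1| compensates the logarithm only after
  splitting ln r = ln (S r) - ln S.\<close>

lemma hurst_majorant_ge_near_zero:
  fixes h2 S r :: real
  assumes h2: "h2 < 1" and S: "1 \<le> S" and r: "0 < r" "r \<le> 1/S"
  shows "(S * r * ln r * r powr (-(h2 + 1/2)))\<^sup>2
    \<le> 2 * S\<^sup>2 * (ln S)\<^sup>2 * r powr (1 - 2*h2) + 8 * S powr (1 + h2) / (1 - h2)\<^sup>2 * r powr (-h2)"
proof -
  have Sr: "0 < S * r" "S * r \<le> 1"
    using S r by (auto simp: field_simps)
  have "(ln r)\<^sup>2 = (ln (S * r) - ln S)\<^sup>2"
    using S r by (simp add: ln_mult)
  also have "\<dots> \<le> 2 * (ln (S * r))\<^sup>2 + 2 * (ln S)\<^sup>2"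
    using zero_le_power2[of "ln (S * r) + ln S"] by (simp add: power2_eq_square algebra_simps)
  finally have ln_r: "(ln r)\<^sup>2 \<le> 2 * (ln (S * r))\<^sup>2 + 2 * (ln S)\<^sup>2" .
  define e where "e = (1 - h2) / 2"
  have "(ln (S * r))\<^sup>2 \<le> (S * r) powr (- 2 * e) / e\<^sup>2"
    using Sr h2 by (intro ln_sq_le_powr_neg) (auto simp: e_def)
  moreover have "- 2 * e = h2 - 1" "e\<^sup>2 = (1 - h2)\<^sup>2 / 4"
    unfolding e_def by (simp_all add: power_divide)
  ultimately have ln_Sr: "(ln (S * r))\<^sup>2 \<le> 4 / (1 - h2)\<^sup>2 * (S * r) powr (h2 - 1)"
    by (simp add: mult.commute)
  have "(S * r * ln r * r powr (-(h2 + 1/2)))\<^sup>2 = S\<^sup>2 * r\<^sup>2 * r powr (-2*h2 - 1) * (ln r)\<^sup>2"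
    using r by (simp add: power_mult_distrib powr_power algebra_simps)
  also have "\<dots> \<le> S\<^sup>2 * r\<^sup>2 * r powr (-2*h2 - 1)
      * (8 / (1 - h2)\<^sup>2 * (S * r) powr (h2 - 1) + 2 * (ln S)\<^sup>2)"
    using ln_r ln_Sr by (intro mult_left_mono) auto
  also have "\<dots> = 2 * S\<^sup>2 * (ln S)\<^sup>2 * (r\<^sup>2 * r powr (-2*h2 - 1))
      + 8 / (1 - h2)\<^sup>2 * (S\<^sup>2 * S powr (h2 - 1)) * (r\<^sup>2 * r powr (h2 - 1) * r powr (-2*h2 - 1))"
    using S r by (simp add: powr_mult algebra_simps)
  also have "\<dots> = 2 * S\<^sup>2 * (ln S)\<^sup>2 * r powr (1 - 2*h2) + 8 / (1 - h2)\<^sup>2 * S powr (1 + h2) * r powr (-h2)"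
    using S r by (simp add: sq_mult_powr powr_add[symmetric])
  finally show ?thesis
    by simp
qed

lemma hurst_majorant_ge:
  fixes h1 h2 S r :: real
  assumes h: "0 < h1" "h2 < 1" and S: "1 \<le> S" and r: "0 < r"
  shows "(min (S * r) 2 * ln r * powr_envelope h1 h2 r)\<^sup>2 \<le> hurst_majorant h1 h2 S r"
proof -
  let ?m = "min (S * r) 2"
  have "0 \<le> 2 * S\<^sup>2 * (ln S)\<^sup>2 * powr_head (1/S) (1 - 2*h2) r"
    and "0 \<le> 8 * S powr (1 + h2) / (1 - h2)\<^sup>2 * powr_head (1/S) (-h2) r"
    and "0 \<le> 4 * (ln S)\<^sup>2 * powr_tail (1/S) (-2*h2 - 1) r"
    and "0 \<le> 16 / h1\<^sup>2 * powr_tail 1 (-h1 - 1) r"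
    by (simp_all add: powr_head_nonneg powr_tail_nonneg)
  note terms_nonneg = this
  have m_sq: "?m\<^sup>2 \<le> 4"
    using S r power_mono[of ?m 2 2] by simp
  consider (near_zero) "r \<le> 1/S" | (middle) "1/S < r" "r < 1" | (large) "1 \<le> r"
    by linarith
  then show ?thesis
  proof cases
    case near_zero
    have "1/S \<le> 1"
      using S by simp
    then have "r < 1 \<or> r = 1"
      using near_zero by linarith
    then have "(?m * ln r * powr_envelope h1 h2 r)\<^sup>2 = (?m * (ln r * r powr (-(h2 + 1/2))))\<^sup>2"
      by (auto simp: powr_envelope_def mult.assoc)
    also have "\<dots> \<le> (S * r * (ln r * r powr (-(h2 + 1/2))))\<^sup>2"
      using S r by (intro sq_mult_le_sq_mult) auto
    also have "\<dots> \<le> 2 * S\<^sup>2 * (ln S)\<^sup>2 * powr_head (1/S) (1 - 2*h2) r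
        + 8 * S powr (1 + h2) / (1 - h2)\<^sup>2 * powr_head (1/S) (-h2) r"
      using hurst_majorant_ge_near_zero[OF h(2) S r near_zero] near_zero r
      by (simp add: powr_head_def mult.assoc)
    finally show ?thesis
      using terms_nonneg unfolding hurst_majorant_def by linarith
  next
    case middle
    have "- ln S \<le> ln r" "ln r < 0"
      using middle S r ln_le_cancel_iff[of "1/S" r] by (auto simp: ln_div)
    then have ln_r: "(ln r)\<^sup>2 \<le> (ln S)\<^sup>2"
      using power_mono[of "- ln r" "ln S" 2] by simp
    have "(?m * ln r * powr_envelope h1 h2 r)\<^sup>2 = ?m\<^sup>2 * (ln r)\<^sup>2 * r powr (-2*h2 - 1)"
      using middle r by (simp add: powr_envelope_def power_mult_distrib powr_power algebra_simps)
    also have "\<dots> \<le> 4 * (ln S)\<^sup>2 * r powr (-2*h2 - 1)"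
      using m_sq ln_r by (intro mult_right_mono mult_mono) auto
    also have "\<dots> = 4 * (ln S)\<^sup>2 * powr_tail (1/S) (-2*h2 - 1) r"
      using middle by (simp add: powr_tail_def)
    finally show ?thesis
      using terms_nonneg unfolding hurst_majorant_def by linarith
  next
    case large
    have "(ln r)\<^sup>2 \<le> r powr (2 * (h1/2)) / (h1/2)\<^sup>2"
      using large h by (intro ln_sq_le_powr) auto
    then have ln_r: "(ln r)\<^sup>2 \<le> 4 / h1\<^sup>2 * r powr h1"
      by (simp add: power_divide mult.commute)
    have "(?m * ln r * powr_envelope h1 h2 r)\<^sup>2 = ?m\<^sup>2 * (ln r)\<^sup>2 * r powr (-2*h1 - 1)"
      using large r by (simp add: powr_envelope_def power_mult_distrib powr_power algebra_simps)
    also have "\<dots> \<le> 4 * (4 / h1\<^sup>2 * r powr h1) * r powr (-2*h1 - 1)"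
      using m_sq ln_r by (intro mult_right_mono mult_mono) auto
    also have "\<dots> = 16 / h1\<^sup>2 * powr_tail 1 (-h1 - 1) r"
      using large by (simp add: powr_tail_def powr_add[symmetric])
    finally show ?thesis
      using terms_nonneg unfolding hurst_majorant_def by linarith
  qed
qed

lemma has_integral_hurst_majorant:
  fixes h1 h2 S :: real
  assumes h: "0 < h1" "0 < h2" "h2 < 1" and S: "1 \<le> S"
  shows "(hurst_majorant h1 h2 S has_integral
      (ln S)\<^sup>2 * S powr (2*h2) / (1 - h2) + 8 * S powr (2*h2) / (1 - h2)^3
      + 2 * (ln S)\<^sup>2 * S powr (2*h2) / h2 + 16 / h1^3) UNIV"
proof -
  have "2 * S\<^sup>2 * (ln S)\<^sup>2 * ((1/S) powr (1 - 2*h2 + 1) / (1 - 2*h2 + 1))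
      = (ln S)\<^sup>2 * (S\<^sup>2 * (1/S) powr (1 - 2*h2 + 1)) / (1 - h2)"
    using h by (simp add: field_simps)
  also have "S\<^sup>2 * (1/S) powr (1 - 2*h2 + 1) = S powr (2*h2)"
    using S by (simp add: powr_divide powr_minus_divide[symmetric] sq_mult_powr)
  finally have head1: "2 * S\<^sup>2 * (ln S)\<^sup>2 * ((1/S) powr (1 - 2*h2 + 1) / (1 - 2*h2 + 1))
      = (ln S)\<^sup>2 * S powr (2*h2) / (1 - h2)" .
  have "8 * S powr (1 + h2) / (1 - h2)\<^sup>2 * ((1/S) powr (-h2 + 1) / (-h2 + 1))
      = 8 * (S powr (1 + h2) * (1/S) powr (-h2 + 1)) / (1 - h2)^3"
    using h by (simp add: field_simps power2_eq_square power3_eq_cube)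
  also have "S powr (1 + h2) * (1/S) powr (-h2 + 1) = S powr (2*h2)"
    using S by (simp add: powr_divide powr_minus_divide[symmetric] powr_add[symmetric])
  finally have head2: "8 * S powr (1 + h2) / (1 - h2)\<^sup>2 * ((1/S) powr (-h2 + 1) / (-h2 + 1))
      = 8 * S powr (2*h2) / (1 - h2)^3" .
  have "(1/S) powr (-2*h2 - 1 + 1) = S powr (2*h2)"
    using S by (simp add: powr_divide powr_minus_divide[symmetric])
  then have tail1: "4 * (ln S)\<^sup>2 * (- ((1/S) powr (-2*h2 - 1 + 1)) / (-2*h2 - 1 + 1))
      = 2 * (ln S)\<^sup>2 * S powr (2*h2) / h2"
    using h by (simp add: field_simps)
  have tail2: "16 / h1\<^sup>2 * (- (1 powr (-h1 - 1 + 1)) / (-h1 - 1 + 1)) = 16 / h1^3"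
    using h by (simp add: field_simps power2_eq_square power3_eq_cube)
  have "(hurst_majorant h1 h2 S has_integral
        2 * S\<^sup>2 * (ln S)\<^sup>2 * ((1/S) powr (1 - 2*h2 + 1) / (1 - 2*h2 + 1))
      + 8 * S powr (1 + h2) / (1 - h2)\<^sup>2 * ((1/S) powr (-h2 + 1) / (-h2 + 1))
      + 4 * (ln S)\<^sup>2 * (- ((1/S) powr (-2*h2 - 1 + 1)) / (-2*h2 - 1 + 1))
      + 16 / h1\<^sup>2 * (- (1 powr (-h1 - 1 + 1)) / (-h1 - 1 + 1))) UNIV"
    unfolding hurst_majorant_def[abs_def] using h S
    by (intro has_integral_add has_integral_mult_right has_integral_powr_head has_integral_powr_tail)
      auto
  then show ?thesis
    unfolding head1 head2 tail1 tail2 .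
qed

definition hurst_const :: "real \<Rightarrow> real \<Rightarrow> real" where
  "hurst_const h1 h2 = 1/(1 - h2) + 8/(1 - h2)^3 + 2/h2 + 16/h1^3"

lemma hurst_const_pos: "0 < h1 \<Longrightarrow> 0 < h2 \<Longrightarrow> h2 < 1 \<Longrightarrow> 0 < hurst_const h1 h2"
  unfolding hurst_const_def by (intro add_pos_pos) auto

lemma hurst_majorant_integral_le:
  fixes h1 h2 S :: real
  assumes h: "0 < h1" "0 < h2" "h2 < 1" and S: "1 \<le> S"
  shows "(ln S)\<^sup>2 * S powr (2*h2) / (1 - h2) + 8 * S powr (2*h2) / (1 - h2)^3
      + 2 * (ln S)\<^sup>2 * S powr (2*h2) / h2 + 16 / h1^3
    \<le> hurst_const h1 h2 * (S powr (2*h2) * ((ln S)\<^sup>2 + 1))"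
proof -
  define P where "P = S powr (2*h2)"
  define L where "L = (ln S)\<^sup>2"
  have P: "1 \<le> P" and L: "0 \<le> L"
    using S h by (simp_all add: P_def L_def ge_one_powr_ge_zero)
  have "L * P \<le> P * (L + 1)" "P \<le> P * (L + 1)" "1 \<le> P * (L + 1)"
    using P L by (simp_all add: algebra_simps) (metis add_increasing2 mult_nonneg_nonneg
        order_trans zero_le_one)
  then have "L * P / (1 - h2) + 8 * P / (1 - h2)^3 + 2 * L * P / h2 + 16 / h1^3
      \<le> P * (L + 1) / (1 - h2) + 8 * (P * (L + 1)) / (1 - h2)^3
        + 2 * (P * (L + 1)) / h2 + 16 * (P * (L + 1)) / h1^3"
    using h by (intro add_mono divide_right_mono) (auto simp: mult.assoc)
  also have "\<dots> = hurst_const h1 h2 * (P * (L + 1))"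
    unfolding hurst_const_def by (simp add: ring_distribs add_divide_distrib ac_simps)
  finally show ?thesis
    unfolding P_def L_def .
qed

lemma mbm_kernel_diff_eq:
  "mbm_kernel H t u - mbm_kernel H s u
    = cis (s * u) * ((cis ((t - s) * u) - 1) * of_real (\<bar>u\<bar> powr (-(H t + 1/2))))
      + (cis (s * u) - 1) * of_real (\<bar>u\<bar> powr (-(H t + 1/2)) - \<bar>u\<bar> powr (-(H s + 1/2)))"
proof -
  have kernel: "mbm_kernel H \<tau> u = (cis (\<tau> * u) - 1) * of_real (\<bar>u\<bar> powr (-(H \<tau> + 1/2)))" for \<tau>
    unfolding mbm_kernel_def powr_minus by (simp only: divide_inverse of_real_inverse)
  have cis_t: "cis (t * u) = cis (s * u) * cis ((t - s) * u)"
    by (simp add: cis_mult algebra_simps)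
  show ?thesis
    unfolding kernel cis_t by (simp add: ring_distribs)
qed

lemma norm_mbm_kernel_diff_le:
  "cmod (mbm_kernel H t u - mbm_kernel H s u)
    \<le> cmod (cis ((t - s) * u) - 1) * \<bar>u\<bar> powr (-(H t + 1/2))
      + cmod (cis (s * u) - 1) * \<bar>\<bar>u\<bar> powr (-(H t + 1/2)) - \<bar>u\<bar> powr (-(H s + 1/2))\<bar>"
  unfolding mbm_kernel_diff_eq
  by (rule order_trans[OF norm_triangle_ineq]) (simp add: norm_mult del: of_real_diff)

lemma increment_term_sq_le_time_majorant:
  fixes d A u :: real
  assumes d: "0 < d" and u: "u \<noteq> 0"
  shows "(cmod (cis (d * u) - 1) * \<bar>u\<bar> powr (-(A + 1/2)))\<^sup>2 \<le> time_majorant d A \<bar>u\<bar>"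
proof -
  have "cmod (cis (d * u) - 1) \<le> min (d * \<bar>u\<bar>) 2"
    using norm_cis_minus_one_le_abs[of "d * u"] norm_cis_minus_one_le_2[of "d * u"] d
    by (simp add: abs_mult)
  then have "(cmod (cis (d * u) - 1) * \<bar>u\<bar> powr (-(A + 1/2)))\<^sup>2
      \<le> (min (d * \<bar>u\<bar>) 2 * \<bar>u\<bar> powr (-(A + 1/2)))\<^sup>2"
    by (intro power_mono mult_right_mono) auto
  also have "\<dots> \<le> time_majorant d A \<bar>u\<bar>"
    using d u by (intro time_majorant_ge) auto
  finally show ?thesis .
qed

lemma hurst_term_sq_le_hurst_majorant:
  fixes h1 h2 A B s u :: real
  assumes h: "0 < h1" "h2 < 1" and AB: "h1 \<le> A" "A \<le> h2" "h1 \<le> B" "B \<le> h2"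
    and s: "0 \<le> s" and u: "u \<noteq> 0"
  shows "(cmod (cis (s * u) - 1) * \<bar>\<bar>u\<bar> powr (-(A + 1/2)) - \<bar>u\<bar> powr (-(B + 1/2))\<bar>)\<^sup>2
    \<le> (A - B)\<^sup>2 * hurst_majorant h1 h2 (max s 1) \<bar>u\<bar>"
proof -
  let ?r = "\<bar>u\<bar>" and ?m = "min (max s 1 * \<bar>u\<bar>) 2"
  have "cmod (cis (s * u) - 1) \<le> ?m"
    using norm_cis_minus_one_le_abs[of "s * u"] norm_cis_minus_one_le_2[of "s * u"] s
    by (simp add: abs_mult) (meson max.cobounded1 mult_right_mono abs_ge_zero order_trans)
  moreover have "\<bar>?r powr (-(A + 1/2)) - ?r powr (-(B + 1/2))\<bar>
      \<le> \<bar>A - B\<bar> * \<bar>ln ?r\<bar> * powr_envelope h1 h2 ?r"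
    using u AB by (intro abs_powr_diff_le_envelope) auto
  ultimately have "(cmod (cis (s * u) - 1) * \<bar>?r powr (-(A + 1/2)) - ?r powr (-(B + 1/2))\<bar>)\<^sup>2
      \<le> (?m * (\<bar>A - B\<bar> * \<bar>ln ?r\<bar> * powr_envelope h1 h2 ?r))\<^sup>2"
    by (intro power_mono mult_mono) auto
  also have "\<dots> = (A - B)\<^sup>2 * (?m * ln ?r * powr_envelope h1 h2 ?r)\<^sup>2"
    by (simp add: power_mult_distrib)
  also have "\<dots> \<le> (A - B)\<^sup>2 * hurst_majorant h1 h2 (max s 1) ?r"
    using h u by (intro mult_left_mono hurst_majorant_ge) auto
  finally show ?thesis .
qed

lemma mbm_kernel_diff_sq_le:
  fixes H :: "real \<Rightarrow> real" and h1 h2 s t u :: real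
  assumes h: "0 < h1" "h2 < 1"
    and Ht: "h1 \<le> H t" "H t \<le> h2" and Hs: "h1 \<le> H s" "H s \<le> h2"
    and st: "0 \<le> s" "s < t"
  shows "(cmod (mbm_kernel H t u - mbm_kernel H s u))\<^sup>2
    \<le> 2 * time_majorant (t - s) (H t) \<bar>u\<bar>
      + 2 * (H t - H s)\<^sup>2 * hurst_majorant h1 h2 (max s 1) \<bar>u\<bar>"
proof (cases "u = 0")
  case True
  then show ?thesis
    by (simp add: mbm_kernel_def add_nonneg_nonneg time_majorant_nonneg hurst_majorant_nonneg)
next
  case False
  define X where "X = cmod (cis ((t - s) * u) - 1) * \<bar>u\<bar> powr (-(H t + 1/2))"
  define Y where "Y = cmod (cis (s * u) - 1) * \<bar>\<bar>u\<bar> powr (-(H t + 1/2)) - \<bar>u\<bar> powr (-(H s + 1/2))\<bar>"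
  have "(cmod (mbm_kernel H t u - mbm_kernel H s u))\<^sup>2 \<le> (X + Y)\<^sup>2"
    using norm_mbm_kernel_diff_le[of H t u s] unfolding X_def Y_def
    by (intro power_mono) auto
  also have "\<dots> \<le> 2 * X\<^sup>2 + 2 * Y\<^sup>2"
    using zero_le_power2[of "X - Y"] by (simp add: power2_eq_square algebra_simps)
  finally have "(cmod (mbm_kernel H t u - mbm_kernel H s u))\<^sup>2 \<le> 2 * X\<^sup>2 + 2 * Y\<^sup>2" .
  moreover have "X\<^sup>2 \<le> time_majorant (t - s) (H t) \<bar>u\<bar>"
    unfolding X_def using st False by (intro increment_term_sq_le_time_majorant) auto
  moreover have "Y\<^sup>2 \<le> (H t - H s)\<^sup>2 * hurst_majorant h1 h2 (max s 1) \<bar>u\<bar>"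
    unfolding Y_def using h Ht Hs st False by (intro hurst_term_sq_le_hurst_majorant) auto
  ultimately show ?thesis
    by linarith
qed

text \<open>Since g \<ge> 0, g |u| \<le> g u + g (-u), and reflection preserves Lebesgue measure.\<close>

lemma integral_lborel_le_of_radial_majorant:
  fixes f g :: "real \<Rightarrow> real"
  assumes [measurable]: "g \<in> borel_measurable borel"
    and g_nonneg: "\<And>x. 0 \<le> g x" and g_int: "(g has_integral W) UNIV"
    and f_le: "\<And>u. f u \<le> g \<bar>u\<bar>"
  shows "(\<integral>u. f u \<partial>lborel) \<le> 2 * W"
proof -
  have W: "0 \<le> W"
    using has_integral_nonneg[OF g_int] g_nonneg by auto
  have int_g: "(\<integral>\<^sup>+x. ennreal (g x) \<partial>lborel) = ennreal W"
    using nn_integral_has_integral_lborel[OF _ g_nonneg g_int] by simp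
  have int_g_reflected: "(\<integral>\<^sup>+x. ennreal (g (- x)) \<partial>lborel) = ennreal W"
    using nn_integral_real_affine[of "\<lambda>x. ennreal (g x)" "-1" 0] int_g by simp
  have "(\<integral>\<^sup>+u. ennreal (f u) \<partial>lborel) \<le> (\<integral>\<^sup>+u. ennreal (g u) + ennreal (g (- u)) \<partial>lborel)"
  proof (intro nn_integral_mono)
    fix u
    have "f u \<le> g u + g (- u)"
      using f_le[of u] g_nonneg[of u] g_nonneg[of "- u"] by (cases "0 \<le> u") auto
    then show "ennreal (f u) \<le> ennreal (g u) + ennreal (g (- u))"
      using g_nonneg by (simp add: ennreal_plus[symmetric] ennreal_leI del: ennreal_plus)
  qed
  also have "\<dots> = ennreal (2 * W)"
    using W by (simp add: nn_integral_add int_g int_g_reflected ennreal_plus[symmetric] del: ennreal_plus)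
  finally show ?thesis
    using W by (intro integral_real_bounded) auto
qed

definition time_const :: "real \<Rightarrow> real \<Rightarrow> real" where
  "time_const h1 h2 = 1/(2 - 2*h2) + 2/h1"

lemma time_const_pos: "0 < h1 \<Longrightarrow> h2 < 1 \<Longrightarrow> 0 < time_const h1 h2"
  unfolding time_const_def by (intro add_pos_pos) auto

lemma zfun_sq: "(zfun h2 s)\<^sup>2 = max s 1 powr (2*h2) * ((ln (max s 1))\<^sup>2 + 1)"
  by (simp add: zfun_def max_def power_mult_distrib powr_power)

lemma mbm_kernel_diff_integral_le:
  fixes H :: "real \<Rightarrow> real" and h1 h2 s t :: real
  assumes h: "0 < h1" "h1 < h2" "h2 < 1"
    and Ht: "h1 \<le> H t" "H t \<le> h2" and Hs: "h1 \<le> H s" "H s \<le> h2"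
    and st: "0 \<le> s" "s \<le> t"
  shows "(\<integral>u. (cmod (mbm_kernel H t u - mbm_kernel H s u))\<^sup>2 \<partial>lborel)
    \<le> 4 * time_const h1 h2 * (t - s) powr (2 * H t)
      + 4 * hurst_const h1 h2 * (H t - H s)\<^sup>2 * (zfun h2 s)\<^sup>2"
proof (cases "s = t")
  case True
  then show ?thesis
    by simp
next
  case False
  with st have "s < t"
    by simp
  define S where "S = max s 1"
  have S: "1 \<le> S"
    by (simp add: S_def)
  define T where "T = (t - s) powr (2 * H t) * (1/(2 - 2 * H t) + 2 / H t)"
  define V where "V = (ln S)\<^sup>2 * S powr (2*h2) / (1 - h2) + 8 * S powr (2*h2) / (1 - h2)^3
      + 2 * (ln S)\<^sup>2 * S powr (2*h2) / h2 + 16 / h1^3"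
  have "((\<lambda>r. 2 * time_majorant (t - s) (H t) r + 2 * (H t - H s)\<^sup>2 * hurst_majorant h1 h2 S r)
      has_integral 2 * T + 2 * (H t - H s)\<^sup>2 * V) UNIV"
    unfolding T_def V_def using h Ht S \<open>s < t\<close>
    by (intro has_integral_add has_integral_mult_right has_integral_time_majorant
        has_integral_hurst_majorant) auto
  then have "(\<integral>u. (cmod (mbm_kernel H t u - mbm_kernel H s u))\<^sup>2 \<partial>lborel)
      \<le> 2 * (2 * T + 2 * (H t - H s)\<^sup>2 * V)"
    using mbm_kernel_diff_sq_le[OF h(1,3) Ht Hs st(1) \<open>s < t\<close>] unfolding S_def
    by (intro integral_lborel_le_of_radial_majorant)
      (auto intro!: add_nonneg_nonneg mult_nonneg_nonneg time_majorant_nonneg hurst_majorant_nonneg)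
  also have "\<dots> \<le> 4 * time_const h1 h2 * (t - s) powr (2 * H t)
      + 4 * hurst_const h1 h2 * (H t - H s)\<^sup>2 * (zfun h2 s)\<^sup>2"
  proof -
    have "1/(2 - 2 * H t) + 2 / H t \<le> time_const h1 h2"
      unfolding time_const_def using h Ht by (intro add_mono divide_left_mono mult_pos_pos) auto
    then have T_le: "T \<le> time_const h1 h2 * (t - s) powr (2 * H t)"
      unfolding T_def by (subst mult.commute) (intro mult_left_mono, auto)
    have "V \<le> hurst_const h1 h2 * (zfun h2 s)\<^sup>2"
      unfolding V_def zfun_sq S_def[symmetric] using h S by (intro hurst_majorant_integral_le) auto
    then have "(H t - H s)\<^sup>2 * V \<le> (H t - H s)\<^sup>2 * (hurst_const h1 h2 * (zfun h2 s)\<^sup>2)"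
      by (rule mult_left_mono) simp
    also have "\<dots> = hurst_const h1 h2 * (H t - H s)\<^sup>2 * (zfun h2 s)\<^sup>2"
      by (simp add: algebra_simps)
    finally have V_le: "(H t - H s)\<^sup>2 * V \<le> hurst_const h1 h2 * (H t - H s)\<^sup>2 * (zfun h2 s)\<^sup>2" .
    show ?thesis
      using add_mono[OF mult_left_mono[OF T_le] mult_left_mono[OF V_le], of 4 4]
      by (simp add: algebra_simps)
  qed
  finally show ?thesis .
qed

theorem lemma1:
  fixes M :: "'a measure" and Y :: "real \<Rightarrow> 'a \<Rightarrow> real"
    and H :: "real \<Rightarrow> real" and h1 h2 c :: real
  assumes "continuous_on {0..} H"
    and "0 < h1" "h1 < h2" "h2 < 1"
    and "\<And>t. t \<ge> 0 \<Longrightarrow> h1 \<le> H t \<and> H t \<le> h2"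
    and "is_harmonizable_mbm M Y H c"
  shows "\<exists>K2>0. \<forall>t s. 0 \<le> s \<longrightarrow> s \<le> t \<longrightarrow>
           (\<integral>\<omega>. (Y t \<omega> - Y s \<omega>)\<^sup>2 \<partial>M)
             \<le> K2 * \<bar>t - s\<bar> powr (2 * H t) + K2 * (H t - H s)\<^sup>2 * (zfun h2 s)\<^sup>2"
proof -
  have h: "0 < h1" "h1 < h2" "h2 < 1"
    using assms(2-4) .
  have c: "0 < c" and E: "\<And>t s. 0 \<le> t \<Longrightarrow> 0 \<le> s \<Longrightarrow> (\<integral>\<omega>. (Y t \<omega> - Y s \<omega>)\<^sup>2 \<partial>M)
      = c * (\<integral>u. (cmod (mbm_kernel H t u - mbm_kernel H s u))\<^sup>2 \<partial>lborel)"
    using assms(6) unfolding is_harmonizable_mbm_def by auto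
  define K where "K = 4 * c * (time_const h1 h2 + hurst_const h1 h2)"
  have C: "0 < time_const h1 h2" "0 < hurst_const h1 h2"
    using h by (auto intro: time_const_pos hurst_const_pos)
  have "(\<integral>\<omega>. (Y t \<omega> - Y s \<omega>)\<^sup>2 \<partial>M)
      \<le> K * \<bar>t - s\<bar> powr (2 * H t) + K * (H t - H s)\<^sup>2 * (zfun h2 s)\<^sup>2"
    if st: "0 \<le> s" "s \<le> t" for t s
  proof -
    have "(\<integral>\<omega>. (Y t \<omega> - Y s \<omega>)\<^sup>2 \<partial>M)
        \<le> c * (4 * time_const h1 h2 * (t - s) powr (2 * H t)
          + 4 * hurst_const h1 h2 * (H t - H s)\<^sup>2 * (zfun h2 s)\<^sup>2)"
      unfolding E[OF order_trans[OF st] st(1)] using c h st assms(5)[of t] assms(5)[of s]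
      by (intro mult_left_mono mbm_kernel_diff_integral_le) auto
    also have "\<dots> = 4 * c * time_const h1 h2 * (t - s) powr (2 * H t)
        + 4 * c * hurst_const h1 h2 * ((H t - H s)\<^sup>2 * (zfun h2 s)\<^sup>2)"
      by (simp add: algebra_simps)
    also have "\<dots> \<le> K * (t - s) powr (2 * H t) + K * ((H t - H s)\<^sup>2 * (zfun h2 s)\<^sup>2)"
      unfolding K_def using c C by (intro add_mono mult_right_mono) auto
    also have "\<dots> = K * \<bar>t - s\<bar> powr (2 * H t) + K * (H t - H s)\<^sup>2 * (zfun h2 s)\<^sup>2"
      using st by (simp add: mult.assoc)
    finally show ?thesis .
  qed
  moreover have "0 < K"
    unfolding K_def using c C by simp
  ultimately show ?thesis
    by blast
qed

end
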